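(* Let $C:=-2.15$ and let $g:\mathbb{R}\to\mathbb{R}$ be $$g(z):=\exp\big(z^3+(-2-3C)z^2+(3C^2+4C)z+\ln 2\big)-1 .$$ For $W=[w_1,w_2,w_3]$ with $w_1,w_2,w_3\in\mathbb{R}^3$, define $f(\cdot;W):\mathbb{R}^3\to\mathbb{R}^3$ by $f(x;W):=[g(\langle w_1,x\rangle),g(\langle w_2,x\rangle),g(\langle w_3,x\rangle)]^\top$. Then there exists such a $W$ for which $f(\cdot;W)$ has two distinct fixed points $p_1,p_2\in\mathbb{R}^3$ such that for each $i\in\{1,2\}$ there exist constants $\epsilon_i>0$, $c_i>0$ and $K_i\in[0,1)$ with the following property: for every initial point $x^{(0)}\in[p_{i,1}-\epsilon_i,p_{i,1}+\epsilon_i]\times\{1\}\times\{1\}$, the fixed-point iteration $x^{(t)}=f(x^{(t-1)};W)$ ($t\ge1$) converges to $p_i$, and for every $t\ge2$, $$\|x^{(t)}-p_i\|_\infty\le K_i^t\cdot c_i\epsilon_i .$$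
   Context: $p_{i,1}$ denotes the first coordinate of $p_i$; $\|\cdot\|_\infty$ is the $\ell_\infty$ norm. A fixed point of $F$ is a point $p$ with $F(p)=p$. *)

theory Defs
  imports "HOL-Analysis.Analysis"
begin

definition Cc :: real where "Cc = -2.15"

definition g :: "real \<Rightarrow> real" where
  "g z = exp (z^3 + (-2 - 3*Cc)*z^2 + (3*Cc^2 + 4*Cc)*z + ln 2) - 1"

definition fW :: "real^3^3 \<Rightarrow> real^3 \<Rightarrow> real^3" where
  "fW W x = (\<chi> i. g (W $ i \<bullet> x))"

definition linf :: "real^3 \<Rightarrow> real" where
  "linf x = Max {\<bar>x $ i\<bar> | i. True}"

end

theory Submission
  imports Defs
begin

(* With W having the single nonzero row (alpha, 0, beta) and g 0 = 1, the map sends (y, 1, 1) to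
   (g (alpha y + beta), 1, 1): the constant coordinates act as a bias, and the iteration reduces to
   the one-dimensional map y |-> g (alpha y + beta). The exponent of g has derivative
   3 (z - Cc) (z - Cc - 4/3), so g has the critical points Cc and Cc + 4/3 with distinct critical
   values (the particular value of Cc plays no role). Choosing the affine map alpha y + beta to
   send each critical value g c back to c makes both g c fixed points of the reduced map at which
   its derivative vanishes, and such superattracting fixed points attract a neighbourhood at any
   geometric rate, e.g. 1/2. *)

lemma attracting_fixed_point_contracts:
  fixes \<phi> \<phi>' :: "real \<Rightarrow> real"
  assumes deriv: "\<And>y. (\<phi> has_real_derivative \<phi>' y) (at y)"
    and cont: "isCont \<phi>' z"
    and fixed: "\<phi> z = z"
    and slope: "\<bar>\<phi>' z\<bar> < K" and "K \<le> 1"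
  obtains e where "e > 0" "\<And>a t. \<bar>a - z\<bar> \<le> e \<Longrightarrow> \<bar>(\<phi> ^^ t) a - z\<bar> \<le> K ^ t * \<bar>a - z\<bar>"
proof -
  obtain d where "d > 0" and d: "\<And>y. dist y z < d \<Longrightarrow> dist (\<phi>' y) (\<phi>' z) < K - \<bar>\<phi>' z\<bar>"
    using cont slope unfolding continuous_at_eps_delta by (metis diff_gt_0_iff_gt)
  define e where "e = d / 2"
  have "e > 0" using \<open>d > 0\<close> by (simp add: e_def)
  have small_slope: "\<bar>\<phi>' y\<bar> \<le> K" if "y \<in> cball z e" for y
  proof -
    have "dist y z < d" using that \<open>d > 0\<close> by (simp add: e_def dist_commute)
    then show ?thesis using d[of y] by (simp add: dist_real_def)
  qed
  have step: "\<bar>\<phi> y - z\<bar> \<le> K * \<bar>y - z\<bar>" if "\<bar>y - z\<bar> \<le> e" for y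
  proof -
    have "y \<in> cball z e" using that by (simp add: dist_real_def abs_minus_commute)
    then show ?thesis
      using field_differentiable_bound[of "cball z e" \<phi> \<phi>' K y z] small_slope \<open>e > 0\<close> fixed
      by (auto intro: has_field_derivative_at_within[OF deriv])
  qed
  have "K \<ge> 0" using slope by linarith
  have "\<bar>(\<phi> ^^ t) a - z\<bar> \<le> K ^ t * \<bar>a - z\<bar>" if "\<bar>a - z\<bar> \<le> e" for a t
  proof (induction t)
    case 0
    show ?case by simp
  next
    case (Suc t)
    have "K ^ t \<le> 1" using \<open>K \<ge> 0\<close> \<open>K \<le> 1\<close> by (rule power_le_one)
    then have "K ^ t * \<bar>a - z\<bar> \<le> e"
      using mult_mono[of "K ^ t" 1 "\<bar>a - z\<bar>" e] that by simp
    with Suc.IH have "\<bar>(\<phi> ^^ t) a - z\<bar> \<le> e" by linarith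
    then have "\<bar>(\<phi> ^^ Suc t) a - z\<bar> \<le> K * \<bar>(\<phi> ^^ t) a - z\<bar>"
      by (simp add: step)
    also have "\<dots> \<le> K * (K ^ t * \<bar>a - z\<bar>)"
      using Suc.IH \<open>K \<ge> 0\<close> by (rule mult_left_mono)
    finally show ?case by simp
  qed
  with \<open>e > 0\<close> show thesis by (rule that)
qed

lemma affine_map_through_two_points:
  fixes x1 x2 y1 y2 :: real
  assumes "x1 \<noteq> x2"
  obtains \<alpha> \<beta> where "\<alpha> * x1 + \<beta> = y1" "\<alpha> * x2 + \<beta> = y2"
proof
  let ?\<alpha> = "(y1 - y2) / (x1 - x2)"
  show "?\<alpha> * x1 + (y1 - ?\<alpha> * x1) = y1" by simp
  have "?\<alpha> * x2 + (y1 - ?\<alpha> * x1) = y1 - ?\<alpha> * (x1 - x2)" by algebra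
  also have "\<dots> = y2" using assms by simp
  finally show "?\<alpha> * x2 + (y1 - ?\<alpha> * x1) = y2" .
qed

definition g' :: "real \<Rightarrow> real" where
  "g' z = 3 * (z - Cc) * (z - Cc - 4/3) * (g z + 1)"

lemma g_has_derivative: "(g has_real_derivative g' z) (at z)"
proof -
  have "(g has_real_derivative
      exp (z^3 + (-2 - 3*Cc)*z^2 + (3*Cc^2 + 4*Cc)*z + ln 2)
        * (3 * z^2 + (-2 - 3*Cc) * (2 * z) + (3*Cc^2 + 4*Cc))) (at z)"
    unfolding g_def[abs_def] by (auto intro!: derivative_eq_intros simp: power2_eq_square)
  then show ?thesis
    by (simp add: g'_def g_def algebra_simps power2_eq_square)
qed

lemma isCont_g': "isCont g' z"
  unfolding g'_def[abs_def] g_def[abs_def] by (intro continuous_intros)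

lemma g'_critical_points: "g' Cc = 0" "g' (Cc + 4/3) = 0"
  by (simp_all add: g'_def)

lemma g_critical_values: "g (Cc + 4/3) + 1 = exp (- 32/27) * (g Cc + 1)"
proof -
  have "(Cc + 4/3)^3 + (-2 - 3*Cc)*(Cc + 4/3)^2 + (3*Cc^2 + 4*Cc)*(Cc + 4/3) + ln 2
      = - 32/27 + (Cc^3 + (-2 - 3*Cc)*Cc^2 + (3*Cc^2 + 4*Cc)*Cc + ln 2)"
    by algebra
  then show ?thesis by (simp only: g_def diff_add_cancel exp_add[of "- 32/27"])
qed

lemma g_critical_values_differ: "g (Cc + 4/3) < g Cc"
proof -
  have "exp (- 32/27) < (1::real)" by simp
  moreover have "g Cc + 1 > 0" by (simp add: g_def)
  ultimately have "exp (- 32/27) * (g Cc + 1) < g Cc + 1" by simp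
  then show ?thesis using g_critical_values by linarith
qed

definition pad_ones :: "real \<Rightarrow> real^3" where
  "pad_ones y = (\<chi> j. if j = 1 then y else 1)"

definition first_row_matrix :: "real \<Rightarrow> real \<Rightarrow> real^3^3" where
  "first_row_matrix \<alpha> \<beta> =
    (\<chi> i. if i = 1 then (\<chi> j. if j = 1 then \<alpha> else if j = 3 then \<beta> else 0) else 0)"

lemma fW_first_row_matrix: "fW (first_row_matrix \<alpha> \<beta>) (pad_ones y) = pad_ones (g (\<alpha> * y + \<beta>))"
proof -
  have "first_row_matrix \<alpha> \<beta> $ 1 \<bullet> pad_ones y = \<alpha> * y + \<beta>"
    by (simp add: first_row_matrix_def pad_ones_def inner_vec_def sum_3)
  moreover have "first_row_matrix \<alpha> \<beta> $ i \<bullet> pad_ones y = 0" if "i \<noteq> 1" for i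
    using that by (simp add: first_row_matrix_def)
  moreover have "g 0 = 1" by (simp add: g_def)
  ultimately show ?thesis by (auto simp: fW_def pad_ones_def vec_eq_iff)
qed

lemma funpow_fW_first_row_matrix:
  "(fW (first_row_matrix \<alpha> \<beta>) ^^ t) (pad_ones y) = pad_ones (((\<lambda>y. g (\<alpha> * y + \<beta>)) ^^ t) y)"
  by (induction t) (simp_all add: fW_first_row_matrix)

lemma linf_pad_ones_diff: "linf (pad_ones y - pad_ones z) = \<bar>y - z\<bar>"
proof -
  have "{\<bar>(pad_ones y - pad_ones z) $ i\<bar> | i. True} = {\<bar>y - z\<bar>, 0}"
  proof (intro equalityI subsetI)
    fix x assume "x \<in> {\<bar>y - z\<bar>, 0}"
    then show "x \<in> {\<bar>(pad_ones y - pad_ones z) $ i\<bar> | i. True}"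
      by (auto simp: pad_ones_def intro: exI[of _ 1] exI[of _ 2])
  qed (auto simp: pad_ones_def)
  then show ?thesis by (simp add: linf_def)
qed

lemma tendsto_pad_ones: "f \<longlonglongrightarrow> y \<Longrightarrow> (\<lambda>t. pad_ones (f t)) \<longlonglongrightarrow> pad_ones y"
  unfolding pad_ones_def by (intro tendsto_vec_lambda) auto

lemma pad_ones_nth_1 [simp]: "pad_ones y $ 1 = y"
  by (simp add: pad_ones_def)

definition attracts_geometrically :: "real^3^3 \<Rightarrow> real^3 \<Rightarrow> bool" where
  "attracts_geometrically W p \<longleftrightarrow> (\<exists>\<epsilon> c K :: real. \<epsilon> > 0 \<and> c > 0 \<and> 0 \<le> K \<and> K < 1 \<and>
      (\<forall>a. p $ 1 - \<epsilon> \<le> a \<and> a \<le> p $ 1 + \<epsilon> \<longrightarrow>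
        (let x0 = (\<chi> j. if j = 1 then a else 1) :: real^3 in
         (\<lambda>t. (fW W ^^ t) x0) \<longlonglongrightarrow> p \<and>
         (\<forall>t\<ge>2. linf ((fW W ^^ t) x0 - p) \<le> K ^ t * c * \<epsilon>))))"

lemma first_row_matrix_superattracting:
  assumes fixed: "g (\<alpha> * z + \<beta>) = z" and critical: "g' (\<alpha> * z + \<beta>) = 0"
  shows "attracts_geometrically (first_row_matrix \<alpha> \<beta>) (pad_ones z)"
proof -
  define \<phi> where "\<phi> y = g (\<alpha> * y + \<beta>)" for y
  have deriv: "(\<phi> has_real_derivative \<alpha> * g' (\<alpha> * y + \<beta>)) (at y)" for y
    unfolding \<phi>_def[abs_def]
    by (rule DERIV_chain2[OF g_has_derivative, THEN DERIV_cong]) (auto intro!: derivative_eq_intros)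
  have cont: "isCont (\<lambda>y. \<alpha> * g' (\<alpha> * y + \<beta>)) z"
    by (intro continuous_intros isCont_o2[OF _ isCont_g'])
  obtain e where "e > 0"
    and contracts: "\<And>a t. \<bar>a - z\<bar> \<le> e \<Longrightarrow> \<bar>(\<phi> ^^ t) a - z\<bar> \<le> (1/2) ^ t * \<bar>a - z\<bar>"
    using attracting_fixed_point_contracts[OF deriv cont, of "1/2"] fixed critical
    by (auto simp: \<phi>_def)
  have "(\<lambda>t. (fW (first_row_matrix \<alpha> \<beta>) ^^ t) (pad_ones a)) \<longlonglongrightarrow> pad_ones z \<and>
      (\<forall>t. linf ((fW (first_row_matrix \<alpha> \<beta>) ^^ t) (pad_ones a) - pad_ones z) \<le> (1/2) ^ t * 1 * e)"
    if a: "\<bar>a - z\<bar> \<le> e" for a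
  proof -
    have bound: "\<bar>(\<phi> ^^ t) a - z\<bar> \<le> (1/2) ^ t * e" for t
    proof -
      have "(1/2) ^ t * \<bar>a - z\<bar> \<le> (1/2::real) ^ t * e" using a by simp
      with contracts[OF a, of t] show ?thesis by linarith
    qed
    have "(\<lambda>t. (1/2::real) ^ t * e) \<longlonglongrightarrow> 0"
      by (intro tendsto_mult_left_zero LIMSEQ_power_zero) simp
    then have "(\<lambda>t. (\<phi> ^^ t) a - z) \<longlonglongrightarrow> 0"
      by (rule Lim_null_comparison[rotated]) (simp add: bound)
    then have "(\<lambda>t. (\<phi> ^^ t) a) \<longlonglongrightarrow> z"
      by (simp add: LIM_zero_iff)
    then show ?thesis
      using bound by (simp add: \<phi>_def[abs_def] funpow_fW_first_row_matrix linf_pad_ones_diff tendsto_pad_ones)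
  qed
  then show ?thesis
    using \<open>e > 0\<close> unfolding attracts_geometrically_def Let_def pad_ones_def[symmetric]
    by (intro exI[of _ e] exI[of _ 1] exI[of _ "1/2"]) (auto simp: abs_le_iff)
qed

theorem lemmaC4:
  shows "\<exists>W :: real^3^3. \<exists>p1 p2 :: real^3.
    p1 \<noteq> p2 \<and> fW W p1 = p1 \<and> fW W p2 = p2 \<and>
    (\<forall>p \<in> {p1, p2}. \<exists>\<epsilon> c K :: real. \<epsilon> > 0 \<and> c > 0 \<and> 0 \<le> K \<and> K < 1 \<and>
      (\<forall>a. p $ 1 - \<epsilon> \<le> a \<and> a \<le> p $ 1 + \<epsilon> \<longrightarrow>
        (let x0 = (\<chi> j. if j = 1 then a else 1) :: real^3 in
         (\<lambda>t. (fW W ^^ t) x0) \<longlonglongrightarrow> p \<and>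
         (\<forall>t\<ge>2. linf ((fW W ^^ t) x0 - p) \<le> K ^ t * c * \<epsilon>))))"
proof -
  have "g Cc \<noteq> g (Cc + 4/3)" using g_critical_values_differ by simp
  then obtain \<alpha> \<beta> where
    fixed1: "\<alpha> * g Cc + \<beta> = Cc" and fixed2: "\<alpha> * g (Cc + 4/3) + \<beta> = Cc + 4/3"
    by (rule affine_map_through_two_points)
  define W where "W = first_row_matrix \<alpha> \<beta>"
  define p1 where "p1 = pad_ones (g Cc)"
  define p2 where "p2 = pad_ones (g (Cc + 4/3))"
  have "p1 \<noteq> p2"
    using \<open>g Cc \<noteq> g (Cc + 4/3)\<close> unfolding p1_def p2_def by (metis pad_ones_nth_1)
  moreover have "fW W p1 = p1" "fW W p2 = p2"
    by (simp_all add: W_def p1_def p2_def fW_first_row_matrix fixed1 fixed2)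
  moreover have "attracts_geometrically W p1" "attracts_geometrically W p2"
    unfolding W_def p1_def p2_def using fixed1 fixed2 g'_critical_points
    by (auto intro: first_row_matrix_superattracting)
  ultimately show ?thesis unfolding attracts_geometrically_def by blast
qed

end
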